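(* Let $r,k,s_1,\dots,s_k$ be nonnegative integers, $\Gamma$ the complete bipartite supernova quiver with these parameters, and $\boldsymbol\mu=(\mu^1,\dots,\mu^k)$ a $k$-tuple of nonzero partitions, $\mu^i=(\mu^i_1\ge\cdots\ge\mu^i_{s_i+1}\ge0)$. Assume $k>1$ or $v_{(1;0)}>1$, where $\mathbf{v}_{\boldsymbol\mu}=(v_a)_{a\in I}$. Then $\mathbf{v}_{\boldsymbol\mu}\in M_\Gamma$ if and only if $r\geq|\mu^i|+\mu^i_1$ for all $i=1,\dots,k$.
   Context: $\Gamma$ has vertex set $I$ consisting of $(l)$, $l=1,\dots,r$, and $(i;j)$, $i=1,\dots,k$, $j=0,\dots,s_i$; its edges are: one edge between $(l)$ and $(i;0)$ for every $l,i$, and one edge between $(i;j)$ and $(i;j-1)$ for $1\le j\le s_i$. The dimension vector $\mathbf{v}_{\boldsymbol\mu}$: $v_{(l)}=1$, $v_{(i;0)}=|\mu^i|$, $v_{(i;j)}=|\mu^i|-\sum_{f=1}^j\mu^i_f$ for $1\le j\le s_i$. Let $(\cdot,\cdot)$ be the symmetric bilinear form on $\mathbb{Z}^I$ with $(\mathbf{e}_a,\mathbf{e}_a)=2$ and $(\mathbf{e}_a,\mathbf{e}_b)=-$(number of edges joining $a$ and $b$) for $a\neq b$. $M_\Gamma$ is the set of nonzero $\mathbf{u}\in\mathbb{Z}_{\ge0}^I$ with connected support such that $(\mathbf{e}_a,\mathbf{u})\le0$ for all $a\in I$. *)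

theory Defs
  imports Main
begin

text \<open>A graph is given by a vertex set I and an edge-count function E (number of
edges joining a and b). Vectors in Z^I are functions vertex => int vanishing off I.\<close>

definition cartan :: "('v \<Rightarrow> 'v \<Rightarrow> nat) \<Rightarrow> 'v \<Rightarrow> 'v \<Rightarrow> int" where
  "cartan E a b = (if a = b then 2 else - int (E a b))"

definition bform :: "'v set \<Rightarrow> ('v \<Rightarrow> 'v \<Rightarrow> nat) \<Rightarrow> ('v \<Rightarrow> int) \<Rightarrow> ('v \<Rightarrow> int) \<Rightarrow> int" where
  "bform I E x y = (\<Sum>a\<in>I. \<Sum>b\<in>I. x a * y b * cartan E a b)"

definition basis_vec :: "'v \<Rightarrow> 'v \<Rightarrow> int" where
  "basis_vec a = (\<lambda>b. if b = a then 1 else 0)"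

definition supp :: "'v set \<Rightarrow> ('v \<Rightarrow> int) \<Rightarrow> 'v set" where
  "supp I u = {a \<in> I. u a \<noteq> 0}"

definition connected_in :: "('v \<Rightarrow> 'v \<Rightarrow> nat) \<Rightarrow> 'v set \<Rightarrow> bool" where
  "connected_in E S \<longleftrightarrow> S \<noteq> {} \<and>
     (\<forall>a\<in>S. \<forall>b\<in>S. (\<lambda>x y. x \<in> S \<and> y \<in> S \<and> 0 < E x y)\<^sup>*\<^sup>* a b)"

definition M_Gamma :: "'v set \<Rightarrow> ('v \<Rightarrow> 'v \<Rightarrow> nat) \<Rightarrow> ('v \<Rightarrow> int) set" where
  "M_Gamma I E = {u. (\<forall>a. a \<notin> I \<longrightarrow> u a = 0) \<and> (\<forall>a\<in>I. 0 \<le> u a)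
      \<and> (\<exists>a\<in>I. u a \<noteq> 0)
      \<and> connected_in E (supp I u)
      \<and> (\<forall>a\<in>I. bform I E (basis_vec a) u \<le> 0)}"

text \<open>Vertices: SL l stands for (l), SA i j stands for (i;j).\<close>
datatype sv = SL nat | SA nat nat

definition sn_vertices :: "nat \<Rightarrow> nat \<Rightarrow> (nat \<Rightarrow> nat) \<Rightarrow> sv set" where
  "sn_vertices r k s = {SL l | l. 1 \<le> l \<and> l \<le> r} \<union> {SA i j | i j. 1 \<le> i \<and> i \<le> k \<and> j \<le> s i}"

fun sn_edges :: "sv \<Rightarrow> sv \<Rightarrow> nat" where
  "sn_edges (SL l) (SA i j) = (if j = 0 then 1 else 0)"
| "sn_edges (SA i j) (SL l) = (if j = 0 then 1 else 0)"
| "sn_edges (SA i j) (SA i' j') = (if i = i' \<and> (j = Suc j' \<or> j' = Suc j) then 1 else 0)"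
| "sn_edges (SL l) (SL l') = 0"

text \<open>Partitions: mu i f is the f-th part of mu^i, f = 1..s_i+1.\<close>
definition psize :: "(nat \<Rightarrow> nat) \<Rightarrow> (nat \<Rightarrow> nat \<Rightarrow> nat) \<Rightarrow> nat \<Rightarrow> nat" where
  "psize s mu i = (\<Sum>f = 1..s i + 1. mu i f)"

definition is_partition_tuple :: "nat \<Rightarrow> (nat \<Rightarrow> nat) \<Rightarrow> (nat \<Rightarrow> nat \<Rightarrow> nat) \<Rightarrow> bool" where
  "is_partition_tuple k s mu \<longleftrightarrow>
     (\<forall>i. 1 \<le> i \<and> i \<le> k \<longrightarrow> (\<forall>f. 1 \<le> f \<and> f \<le> s i \<longrightarrow> mu i (Suc f) \<le> mu i f))"

definition vdim :: "nat \<Rightarrow> nat \<Rightarrow> (nat \<Rightarrow> nat) \<Rightarrow> (nat \<Rightarrow> nat \<Rightarrow> nat) \<Rightarrow> sv \<Rightarrow> int" where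
  "vdim r k s mu a =
     (if a \<in> sn_vertices r k s then
        (case a of SL l \<Rightarrow> 1
                 | SA i j \<Rightarrow> int (psize s mu i) - int (\<Sum>f = 1..j. mu i f))
      else 0)"

end

theory Submission
  imports Defs
begin

text \<open>For a graph without multiple edges, (e_a, v) = 2 v_a minus the sum of v over the
neighbours of a. For v = v_mu this is 2 - \<Sum>|mu^i| at every vertex (l), which is nonpositive
by the hypothesis on k and v_(1;0); it is mu^i_(j+1) - mu^i_j \<le> 0 at (i;j) with j \<ge> 1,
because mu^i is a partition; and it is |mu^i| + mu^i_1 - r at (i;0). Hence the
inequalities defining M_Gamma say exactly r \<ge> |mu^i| + mu^i_1. The remaining conditions
then hold automatically: v_mu is nonincreasing along each leg, so the support of a leg is
an initial segment attached to the central vertices (l), of which there is at least one.\<close>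

definition neighbours :: "'v set \<Rightarrow> ('v \<Rightarrow> 'v \<Rightarrow> nat) \<Rightarrow> 'v \<Rightarrow> 'v set" where
  "neighbours I E a = {b \<in> I - {a}. E a b = 1}"

lemma bform_basis_vec:
  assumes "finite I" "a \<in> I"
  shows "bform I E (basis_vec a) u = 2 * u a - (\<Sum>b\<in>I - {a}. int (E a b) * u b)"
proof -
  have "bform I E (basis_vec a) u
          = (\<Sum>x\<in>I. if x = a then (\<Sum>b\<in>I. u b * cartan E a b) else 0)"
    unfolding bform_def basis_vec_def by (auto intro!: sum.cong simp: ac_simps)
  also have "\<dots> = (\<Sum>b\<in>I. u b * cartan E a b)"
    using assms by simp
  also have "\<dots> = 2 * u a + (\<Sum>b\<in>I - {a}. u b * cartan E a b)"
    using assms by (simp add: sum.remove cartan_def)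
  also have "(\<Sum>b\<in>I - {a}. u b * cartan E a b) = - (\<Sum>b\<in>I - {a}. int (E a b) * u b)"
    unfolding sum_negf[symmetric] by (rule sum.cong) (auto simp: cartan_def)
  finally show ?thesis by simp
qed

lemma bform_basis_vec_simple_graph:
  assumes "finite I" "a \<in> I" "\<And>b. E a b \<le> 1"
  shows "bform I E (basis_vec a) u = 2 * u a - (\<Sum>b\<in>neighbours I E a. u b)"
proof -
  have "int (E a b) * u b = (if E a b = 1 then u b else 0)" for b
    using assms(3)[of b] by (cases "E a b") auto
  then show ?thesis
    using assms sum.inter_filter[of "I - {a}" u "\<lambda>b. E a b = 1"]
    by (simp add: bform_basis_vec neighbours_def)
qed

lemma connected_in_via_hub:
  assumes sym: "\<And>x y. E x y = E y x" and "c \<in> S"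
    and hub: "\<And>a. a \<in> S \<Longrightarrow> (\<lambda>x y. x \<in> S \<and> y \<in> S \<and> 0 < E x y)\<^sup>*\<^sup>* a c"
  shows "connected_in E S"
  unfolding connected_in_def
proof (intro conjI ballI)
  show "S \<noteq> {}" using \<open>c \<in> S\<close> by auto
next
  let ?R = "\<lambda>x y. x \<in> S \<and> y \<in> S \<and> 0 < E x y"
  fix a b assume "a \<in> S" "b \<in> S"
  have "symp ?R" by (auto intro: sympI simp: sym)
  then have "?R\<^sup>*\<^sup>* c b" using hub[OF \<open>b \<in> S\<close>] by (blast dest: sympD[OF symp_rtranclp])
  then show "?R\<^sup>*\<^sup>* a b" using hub[OF \<open>a \<in> S\<close>] by (rule rtranclp_trans[rotated])
qed

lemma sn_vertices_iff [simp]: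
  "SL l \<in> sn_vertices r k s \<longleftrightarrow> 1 \<le> l \<and> l \<le> r"
  "SA i j \<in> sn_vertices r k s \<longleftrightarrow> 1 \<le> i \<and> i \<le> k \<and> j \<le> s i"
  by (auto simp: sn_vertices_def)

lemma finite_sn_vertices: "finite (sn_vertices r k s)"
proof -
  have "sn_vertices r k s \<subseteq> SL ` {1..r} \<union> (\<lambda>(i, j). SA i j) ` (SIGMA i:{1..k}. {..s i})"
    by (auto simp: sn_vertices_def)
  then show ?thesis by (rule finite_subset) auto
qed

lemma sn_edges_le_1: "sn_edges a b \<le> 1"
  by (cases a; cases b) auto

lemma sn_edges_sym: "sn_edges a b = sn_edges b a"
  by (cases a; cases b) auto

lemma neighbours_SL:
  "neighbours (sn_vertices r k s) sn_edges (SL l) = (\<lambda>i. SA i 0) ` {1..k}"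
  by (rule set_eqI, case_tac x) (auto simp: neighbours_def)

lemma neighbours_SA_0:
  assumes "1 \<le> i" "i \<le> k"
  shows "neighbours (sn_vertices r k s) sn_edges (SA i 0)
           = SL ` {1..r} \<union> (if 1 \<le> s i then {SA i 1} else {})"
  by (rule set_eqI, case_tac x) (use assms in \<open>auto simp: neighbours_def\<close>)

lemma neighbours_SA_Suc:
  assumes "1 \<le> i" "i \<le> k" "Suc j \<le> s i"
  shows "neighbours (sn_vertices r k s) sn_edges (SA i (Suc j))
           = insert (SA i j) (if Suc j < s i then {SA i (Suc (Suc j))} else {})"
  by (rule set_eqI, case_tac x) (use assms in \<open>auto simp: neighbours_def\<close>)

lemma bform_sn_basis_vec:
  assumes "a \<in> sn_vertices r k s"
  shows "bform (sn_vertices r k s) sn_edges (basis_vec a) u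
           = 2 * u a - (\<Sum>b\<in>neighbours (sn_vertices r k s) sn_edges a. u b)"
  by (rule bform_basis_vec_simple_graph[OF finite_sn_vertices assms sn_edges_le_1])

lemma vdim_SL:
  assumes "1 \<le> l" "l \<le> r"
  shows "vdim r k s mu (SL l) = 1"
  using assms by (simp add: vdim_def)

lemma vdim_SA:
  assumes "1 \<le> i" "i \<le> k" "j \<le> s i"
  shows "vdim r k s mu (SA i j) = int (psize s mu i) - int (\<Sum>f = 1..j. mu i f)"
  using assms by (simp add: vdim_def)

lemma partial_sum_le_psize:
  assumes "j \<le> s i + 1"
  shows "(\<Sum>f = 1..j. mu i f) \<le> psize s mu i"
  unfolding psize_def using assms by (intro sum_mono2) auto

lemma vdim_nonneg: "0 \<le> vdim r k s mu a"
proof (cases a)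
  case (SA i j)
  then show ?thesis
    using partial_sum_le_psize[of j s i mu] by (auto simp: vdim_def simp del: of_nat_sum)
qed (simp add: vdim_def)

lemma bform_vdim_SL:
  assumes "1 \<le> l" "l \<le> r"
  shows "bform (sn_vertices r k s) sn_edges (basis_vec (SL l)) (vdim r k s mu)
           = 2 - (\<Sum>i = 1..k. int (psize s mu i))"
proof -
  have "(\<Sum>b\<in>(\<lambda>i. SA i 0) ` {1..k}. vdim r k s mu b) = (\<Sum>i = 1..k. vdim r k s mu (SA i 0))"
    by (rule sum.reindex[unfolded comp_def]) (auto simp: inj_on_def)
  also have "\<dots> = (\<Sum>i = 1..k. int (psize s mu i))"
    by (rule sum.cong) (auto simp: vdim_SA)
  finally show ?thesis
    using assms by (simp add: bform_sn_basis_vec neighbours_SL vdim_SL)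
qed

lemma bform_vdim_SA_0:
  assumes "1 \<le> i" "i \<le> k"
  shows "bform (sn_vertices r k s) sn_edges (basis_vec (SA i 0)) (vdim r k s mu)
           = int (psize s mu i) + int (mu i 1) - int r"
proof -
  let ?V = "vdim r k s mu"
  have sum_SL: "(\<Sum>b\<in>SL ` {1..r}. ?V b) = int r"
  proof -
    have "(\<Sum>b\<in>SL ` {1..r}. ?V b) = (\<Sum>l = 1..r. ?V (SL l))"
      by (rule sum.reindex[unfolded comp_def]) (auto simp: inj_on_def)
    also have "\<dots> = (\<Sum>l = 1..r. 1)" by (rule sum.cong) (auto simp: vdim_SL)
    finally show ?thesis by simp
  qed
  show ?thesis
  proof (cases "s i")
    case 0
    then show ?thesis
      using assms sum_SL by (simp add: bform_sn_basis_vec neighbours_SA_0 vdim_SA psize_def)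
  next
    case (Suc n)
    have "?V (SA i 1) = int (psize s mu i) - int (mu i 1)"
      using assms Suc by (simp add: vdim_SA)
    then show ?thesis
      using assms sum_SL Suc by (simp add: bform_sn_basis_vec neighbours_SA_0 vdim_SA image_iff)
  qed
qed

lemma bform_vdim_SA_Suc:
  assumes "1 \<le> i" "i \<le> k" "Suc j \<le> s i"
  shows "bform (sn_vertices r k s) sn_edges (basis_vec (SA i (Suc j))) (vdim r k s mu)
           = int (mu i (Suc (Suc j))) - int (mu i (Suc j))"
proof -
  let ?V = "vdim r k s mu" and ?\<sigma> = "\<lambda>j. int (\<Sum>f = 1..j. mu i f)"
  \<comment> \<open>At the end of the leg the missing neighbour counts as |mu^i| - \<sigma>(s_i + 1) = 0.\<close>
  have "(if Suc j < s i then ?V (SA i (Suc (Suc j))) else 0)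
          = int (psize s mu i) - ?\<sigma> (Suc (Suc j))"
  proof (cases "Suc j < s i")
    case False
    then have "s i + 1 = Suc (Suc j)" using assms by simp
    then show ?thesis using False by (simp add: psize_def)
  qed (use assms in \<open>simp add: vdim_SA\<close>)
  then show ?thesis
    using assms by (auto simp: bform_sn_basis_vec neighbours_SA_Suc vdim_SA)
qed

lemma supp_vdim_SA_iff:
  "SA i j \<in> supp (sn_vertices r k s) (vdim r k s mu)
     \<longleftrightarrow> 1 \<le> i \<and> i \<le> k \<and> j \<le> s i \<and> (\<Sum>f = 1..j. mu i f) < psize s mu i"
  using partial_sum_le_psize[of j s i mu] by (auto simp: supp_def vdim_SA simp del: of_nat_sum)

lemma connected_supp_vdim:
  assumes "1 \<le> r" "1 \<le> k" "0 < psize s mu 1"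
  shows "connected_in sn_edges (supp (sn_vertices r k s) (vdim r k s mu))"
proof (rule connected_in_via_hub[OF sn_edges_sym])
  let ?S = "supp (sn_vertices r k s) (vdim r k s mu)"
  let ?R = "\<lambda>x y. x \<in> ?S \<and> y \<in> ?S \<and> 0 < sn_edges x y"
  have SL_in: "SL l \<in> ?S" if "1 \<le> l" "l \<le> r" for l
    using that by (simp add: supp_def vdim_SL)
  then show "SL 1 \<in> ?S" using assms(1) by simp
  have SA_to_hub: "?R\<^sup>*\<^sup>* (SA i j) (SL 1)" if "SA i j \<in> ?S" for i j
    using that
  proof (induction j)
    case 0
    have "?R (SA i 0) (SL 1)" using 0 SL_in[of 1] assms(1) by simp
    then show ?case by (rule r_into_rtranclp)
  next
    case (Suc j)
    have "(\<Sum>f = 1..j. mu i f) \<le> (\<Sum>f = 1..Suc j. mu i f)" by simp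
    then have "SA i j \<in> ?S" using Suc.prems by (simp add: supp_vdim_SA_iff)
    with Suc.prems have "?R (SA i (Suc j)) (SA i j)" by simp
    then show ?case using Suc.IH[OF \<open>SA i j \<in> ?S\<close>] by (rule converse_rtranclp_into_rtranclp)
  qed
  show "?R\<^sup>*\<^sup>* a (SL 1)" if "a \<in> ?S" for a
  proof (cases a)
    case (SL l)
    have "SA 1 0 \<in> ?S" using assms(2,3) by (simp add: supp_vdim_SA_iff)
    with that SL have "?R a (SA 1 0)" by simp
    then show ?thesis using SA_to_hub[OF \<open>SA 1 0 \<in> ?S\<close>] by (rule converse_rtranclp_into_rtranclp)
  next
    case (SA i j)
    then show ?thesis using that SA_to_hub by simp
  qed
qed

lemma bform_vdim_nonpos_iff:
  assumes "is_partition_tuple k s mu"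
    and psize_pos: "\<forall>i. 1 \<le> i \<and> i \<le> k \<longrightarrow> psize s mu i > 0"
    and "1 < k \<or> (1 \<le> k \<and> vdim r k s mu (SA 1 0) > 1)"
  shows "(\<forall>a\<in>sn_vertices r k s. bform (sn_vertices r k s) sn_edges (basis_vec a) (vdim r k s mu) \<le> 0)
         \<longleftrightarrow> (\<forall>i. 1 \<le> i \<and> i \<le> k \<longrightarrow> psize s mu i + mu i 1 \<le> r)"
    (is "(\<forall>a\<in>?I. ?b a \<le> 0) \<longleftrightarrow> ?cond")
proof
  assume nonpos: "\<forall>a\<in>?I. ?b a \<le> 0"
  show ?cond
  proof (intro allI impI)
    fix i assume i: "1 \<le> i \<and> i \<le> k"
    with nonpos have "?b (SA i 0) \<le> 0" by simp
    with i show "psize s mu i + mu i 1 \<le> r" by (simp add: bform_vdim_SA_0)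
  qed
next
  assume cond: ?cond
  have "2 \<le> (\<Sum>i = 1..k. int (psize s mu i))"
  proof (cases "1 < k")
    case True
    have "(\<Sum>i = 1..k. 1) \<le> (\<Sum>i = 1..k. int (psize s mu i))"
      using psize_pos by (intro sum_mono) force
    then show ?thesis using True by simp
  next
    case False
    with assms(3) have "k = 1" by simp
    then show ?thesis using assms(3) by (simp add: vdim_SA)
  qed
  then have SL: "?b (SL l) \<le> 0" if "SL l \<in> ?I" for l
    using that by (simp add: bform_vdim_SL)
  have SA: "?b (SA i j) \<le> 0" if "SA i j \<in> ?I" for i j
  proof (cases j)
    case 0
    with that cond have "psize s mu i + mu i 1 \<le> r" by simp
    then show ?thesis using that 0 by (simp add: bform_vdim_SA_0)
  next
    case (Suc j')
    have "mu i (Suc j) \<le> mu i j"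
      using assms(1) that Suc unfolding is_partition_tuple_def by simp
    then show ?thesis using that Suc by (simp add: bform_vdim_SA_Suc)
  qed
  show "\<forall>a\<in>?I. ?b a \<le> 0"
  proof
    fix a assume "a \<in> ?I"
    with SL SA show "?b a \<le> 0" by (cases a) blast+
  qed
qed

theorem lemma2p6:
  fixes r k :: nat and s :: "nat \<Rightarrow> nat" and mu :: "nat \<Rightarrow> nat \<Rightarrow> nat"
  assumes "is_partition_tuple k s mu"
    and "\<forall>i. 1 \<le> i \<and> i \<le> k \<longrightarrow> psize s mu i > 0"
    and "1 < k \<or> (1 \<le> k \<and> vdim r k s mu (SA 1 0) > 1)"
  shows "vdim r k s mu \<in> M_Gamma (sn_vertices r k s) sn_edges \<longleftrightarrow>
         (\<forall>i. 1 \<le> i \<and> i \<le> k \<longrightarrow> psize s mu i + mu i 1 \<le> r)"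
    (is "?V \<in> M_Gamma ?I _ \<longleftrightarrow> ?cond")
proof
  assume "?V \<in> M_Gamma ?I sn_edges"
  then show ?cond using bform_vdim_nonpos_iff[OF assms] by (simp add: M_Gamma_def)
next
  assume cond: ?cond
  have "1 \<le> k" using assms(3) by auto
  with assms(2) have psize_1: "0 < psize s mu 1" by simp
  with cond \<open>1 \<le> k\<close> have "1 \<le> r" by force
  have "SA 1 0 \<in> ?I" "?V (SA 1 0) \<noteq> 0" using \<open>1 \<le> k\<close> psize_1 by (simp_all add: vdim_SA)
  moreover have "\<forall>a. a \<notin> ?I \<longrightarrow> ?V a = 0" by (simp add: vdim_def)
  ultimately show "?V \<in> M_Gamma ?I sn_edges"
    unfolding M_Gamma_def
    using vdim_nonneg connected_supp_vdim[OF \<open>1 \<le> r\<close> \<open>1 \<le> k\<close> psize_1]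
      bform_vdim_nonpos_iff[OF assms] cond
    by blast
qed

end
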